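(* Let $T\ge 1$ be an integer and $M>0$. Assume: (A1) $f:\{1,\dots,T\}\times\mathbb{R}\times[-M,M]\to\mathbb{R}$ is such that $f(k,\cdot,\cdot)$ is continuous on $\mathbb{R}\times[-M,M]$ for each $k\in\{1,\dots,T\}$; $p:\{1,\dots,T+1\}\to\mathbb{R}$ and $g:\{1,\dots,T\}\to\mathbb{R}$; (A2) there exists $\alpha>0$ such that $y f(k,y,u)\le 0$ for all $|y|\ge\alpha$, all $|u|\le M$ and all $k=1,\dots,T$; (A3) $m=\min_{k\in\{1,\dots,T+1\}}p(k)>0$. Then for every fixed $u\in L_M$ the set $V_u$ is nonempty, i.e. there exists at least one solution $x\in V_u$ of the problem $$\Delta\big(p(k)\Delta x(k-1)\big)+f(k,x(k),u(k))=g(k),\quad k=1,\dots,T,\qquad x(0)=x(T+1)=0.$$ Moreover, let $\{u_n\}_{n\ge1}\subset L_M$ be a sequence converging to $\overline{u}\in L_M$ (in the maximum norm). Then for any sequence $\{x_n\}_{n\ge1}$ with $x_n\in V_{u_n}$ for each $n$, there exist a subsequence $\{x_{n_i}\}_{i\ge1}$ and $\overline{x}\in E$ such that $x_{n_i}\to\overline{x}$ as $i\to\infty$ and $J_{\overline{u}}(\overline{x})=\inf_{y\in E}J_{\overline{u}}(y)$. Furthermore $\overline{x}\in V_{\overline{u}}$, i.e. $\overline{x}$ satisfies $$\Delta\big(p(k)\Delta \overline{x}(k-1)\big)+f(k,\overline{x}(k),\overline{u}(k))=g(k),\quad k=1,\dots,T,\qquad \overline{x}(0)=\overline{x}(T+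1)=0.$$
   Context: For integers $A\le B$, $[A,B]$ denotes the discrete interval $\{A,A+1,\dots,B\}$. $\Delta$ is the forward difference: $\Delta x(k)=x(k+1)-x(k)$. $L_M=\{u:\{1,\dots,T\}\to\mathbb{R} : \max_{k}|u(k)|\le M\}$, with the maximum norm. $E$ is the space of functions $y:\{0,\dots,T+1\}\to\mathbb{R}$ with $y(0)=y(T+1)=0$, normed by $\|y\|=\sqrt{\sum_{k=1}^{T}(\Delta y(k))^2}$ (equivalent to the Euclidean norm; convergence in $E$ refers to this norm). For $k\in\{1,\dots,T\}$, $y\in\mathbb{R}$, $|u|\le M$, let $F(k,y,u)=\int_0^{y}f(k,t,u)\,dt$. For $u\in L_M$ the functional $J_u:E\to\mathbb{R}$ is $$J_u(y)=\sum_{k=1}^{T+1}\frac{p(k)}{2}\big(\Delta y(k-1)\big)^2-\sum_{k=1}^{T}F(k,y(k),u(k))+\sum_{k=1}^{T}g(k)y(k),$$ and $V_u=\{x\in E: J_u(x)=\inf_{v\in E}J_u(v)\ \text{and}\ \tfrac{d}{dx}J_u(x)=0\}$ (the set of minimizers of $J_u$ at which its derivative vanishes). *)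

theory Defs
  imports "HOL-Analysis.Analysis"
begin

definition fdiff :: "(nat \<Rightarrow> real) \<Rightarrow> nat \<Rightarrow> real" where
  "fdiff x k = x (Suc k) - x k"

text \<open>The space E: functions on {0..T+1} vanishing at 0 and T+1
  (represented as nat \<Rightarrow> real, extended by 0 beyond T+1).\<close>
definition Espace :: "nat \<Rightarrow> (nat \<Rightarrow> real) set" where
  "Espace T = {y. y 0 = 0 \<and> y (T + 1) = 0 \<and> (\<forall>k > T + 1. y k = 0)}"

definition Enorm :: "nat \<Rightarrow> (nat \<Rightarrow> real) \<Rightarrow> real" where
  "Enorm T y = sqrt (\<Sum>k = 1..T. (fdiff y k)\<^sup>2)"

definition LM :: "nat \<Rightarrow> real \<Rightarrow> (nat \<Rightarrow> real) set" where
  "LM T M = {u. \<forall>k \<in> {1..T}. \<bar>u k\<bar> \<le> M}"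

definition maxnorm :: "nat \<Rightarrow> (nat \<Rightarrow> real) \<Rightarrow> real" where
  "maxnorm T u = Max ((\<lambda>k. \<bar>u k\<bar>) ` {1..T})"

definition Fprim :: "(nat \<Rightarrow> real \<Rightarrow> real \<Rightarrow> real) \<Rightarrow> nat \<Rightarrow> real \<Rightarrow> real \<Rightarrow> real" where
  "Fprim f k y u = (if 0 \<le> y then integral {0..y} (\<lambda>t. f k t u)
                    else - integral {y..0} (\<lambda>t. f k t u))"

definition Jfun :: "nat \<Rightarrow> (nat \<Rightarrow> real) \<Rightarrow> (nat \<Rightarrow> real \<Rightarrow> real \<Rightarrow> real) \<Rightarrow> (nat \<Rightarrow> real)
      \<Rightarrow> (nat \<Rightarrow> real) \<Rightarrow> (nat \<Rightarrow> real) \<Rightarrow> real" where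
  "Jfun T p f g u y =
     (\<Sum>k = 1..T+1. p k / 2 * (fdiff y (k - 1))\<^sup>2)
     - (\<Sum>k = 1..T. Fprim f k (y k) (u k))
     + (\<Sum>k = 1..T. g k * y k)"

text \<open>V_u: minimizers of J_u over E at which the derivative of J_u vanishes
  (derivative vanishing expressed as: the directional derivative of J_u at x
  exists and equals 0 in every direction h of E).\<close>
definition Vset :: "nat \<Rightarrow> (nat \<Rightarrow> real) \<Rightarrow> (nat \<Rightarrow> real \<Rightarrow> real \<Rightarrow> real) \<Rightarrow> (nat \<Rightarrow> real)
      \<Rightarrow> (nat \<Rightarrow> real) \<Rightarrow> (nat \<Rightarrow> real) set" where
  "Vset T p f g u = {x \<in> Espace T.
      (\<forall>v \<in> Espace T. Jfun T p f g u x \<le> Jfun T p f g u v) \<and>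
      (\<forall>h \<in> Espace T. ((\<lambda>t. Jfun T p f g u (\<lambda>k. x k + t * h k)) has_real_derivative 0) (at 0))}"

definition solves_bvp :: "nat \<Rightarrow> (nat \<Rightarrow> real) \<Rightarrow> (nat \<Rightarrow> real \<Rightarrow> real \<Rightarrow> real) \<Rightarrow> (nat \<Rightarrow> real)
      \<Rightarrow> (nat \<Rightarrow> real) \<Rightarrow> (nat \<Rightarrow> real) \<Rightarrow> bool" where
  "solves_bvp T p f g u x \<longleftrightarrow>
     x 0 = 0 \<and> x (T + 1) = 0 \<and>
     (\<forall>k \<in> {1..T}. fdiff (\<lambda>j. p j * fdiff x (j - 1)) k + f k (x k) (u k) = g k)"

end

theory Submission
  imports Defs
begin

text \<open>For every \<open>u \<in> L\<^sub>M\<close> the functional \<open>J\<^sub>u\<close> is bounded below by a coercive quadratic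
  expression whose constants do not depend on \<open>u\<close>: the kinetic term dominates
  \<open>m/2 \<Sum> (\<Delta>y)\<^sup>2\<close>, the linear term is controlled by \<open>\<Sum> |\<Delta>y|\<close>, and (A2) makes every primitive
  \<open>F(k,\<cdot>,u)\<close> bounded above. Hence sublevel sets of all \<open>J\<^sub>u\<close> lie in one bounded set of
  the finite dimensional space \<open>E\<close>, so (approximate) minimisers have convergent subsequences.
  Since \<open>J\<close> is jointly continuous in \<open>(y,u)\<close>, a limit of approximate minimisers of \<open>J\<^sub>u\<^sub>n\<close>
  minimises \<open>J\<^sub>u\<close> when \<open>u\<^sub>n \<rightarrow> u\<close>; taking \<open>u\<^sub>n = u\<close> gives existence. A minimiser is a
  critical point, and testing the directional derivative with the unit vectors of \<open>E\<close>
  yields, after summation by parts, the difference equation.\<close>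

definition signed_integral :: "(real \<Rightarrow> real) \<Rightarrow> real \<Rightarrow> real" where
  "signed_integral h y = (if 0 \<le> y then integral {0..y} h else - integral {y..0} h)"

lemma signed_integral_0 [simp]: "signed_integral h 0 = 0"
  by (simp add: signed_integral_def)

lemma signed_integral_eq_integral_diff:
  assumes h: "continuous_on UNIV h" and "a \<le> 0" "a \<le> y"
  shows "signed_integral h y = integral {a..y} h - integral {a..0} h"
proof (cases "0 \<le> y")
  case True
  have "integral {a..0} h + integral {0..y} h = integral {a..y} h"
    by (rule Henstock_Kurzweil_Integration.integral_combine) (use assms True in \<open>auto intro!: integrable_continuous_real continuous_on_subset[OF h]\<close>)
  then show ?thesis using True by (simp add: signed_integral_def)
next
  case False
  have "integral {a..y} h + integral {y..0} h = integral {a..0} h"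
    by (rule Henstock_Kurzweil_Integration.integral_combine) (use assms False in \<open>auto intro!: integrable_continuous_real continuous_on_subset[OF h]\<close>)
  then show ?thesis using False by (simp add: signed_integral_def)
qed

lemma signed_integral_has_real_derivative:
  assumes h: "continuous_on UNIV h"
  shows "(signed_integral h has_real_derivative h x) (at x)"
proof -
  define a where "a = min 0 x - 1"
  have "((\<lambda>y. integral {a..y} h) has_real_derivative h x) (at x within {a..x+1})"
    by (rule integral_has_real_derivative) (auto simp: a_def intro: continuous_on_subset[OF h])
  moreover have "at x within {a..x+1} = at x"
    by (rule at_within_Icc_at) (auto simp: a_def)
  ultimately have "((\<lambda>y. integral {a..y} h - integral {a..0} h) has_real_derivative h x) (at x)"
    by (auto intro!: derivative_eq_intros)
  then show ?thesis
    by (rule has_field_derivative_transform_within_open[of _ _ _ "{a<..}"])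
       (auto simp: a_def intro!: signed_integral_eq_integral_diff[OF h, symmetric])
qed

lemma signed_integral_lipschitz:
  assumes h: "continuous_on UNIV h" and B: "\<And>t. \<bar>t\<bar> \<le> R \<Longrightarrow> \<bar>h t\<bar> \<le> B"
    and "\<bar>y\<bar> \<le> R" "\<bar>z\<bar> \<le> R"
  shows "\<bar>signed_integral h z - signed_integral h y\<bar> \<le> B * \<bar>z - y\<bar>"
proof -
  have ordered: "\<bar>signed_integral h b - signed_integral h a\<bar> \<le> B * \<bar>b - a\<bar>"
    if "a < b" "\<bar>a\<bar> \<le> R" "\<bar>b\<bar> \<le> R" for a b
  proof -
    obtain w where w: "a < w" "w < b" "signed_integral h b - signed_integral h a = (b - a) * h w"
      using MVT2[OF \<open>a < b\<close>, of "signed_integral h" h] signed_integral_has_real_derivative[OF h] by blast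
    have "\<bar>h w\<bar> \<le> B" using w that by (intro B) auto
    then show ?thesis using w by (simp add: abs_mult mult.commute mult_left_mono)
  qed
  consider "y < z" | "y = z" | "z < y" by linarith
  then show ?thesis
    using ordered[of y z] ordered[of z y] assms(3,4) by cases (auto simp: abs_minus_commute)
qed

text \<open>By the sign condition the primitive increases on \<open>(-\<infinity>,-\<alpha>]\<close> and decreases on
  \<open>[\<alpha>,\<infinity>)\<close>, so it is bounded by its values on \<open>[-\<alpha>,\<alpha>]\<close>.\<close>
lemma signed_integral_bounded_above:
  assumes h: "continuous_on UNIV h" and "\<alpha> > 0"
    and sign: "\<And>t. \<bar>t\<bar> \<ge> \<alpha> \<Longrightarrow> t * h t \<le> 0"
    and B: "\<And>t. \<bar>t\<bar> \<le> \<alpha> \<Longrightarrow> \<bar>h t\<bar> \<le> B"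
  shows "signed_integral h y \<le> \<alpha> * B"
proof -
  have inner: "signed_integral h y \<le> \<alpha> * B" if "\<bar>y\<bar> \<le> \<alpha>" for y
  proof -
    have "\<bar>signed_integral h y - signed_integral h 0\<bar> \<le> B * \<bar>y - 0\<bar>"
      by (rule signed_integral_lipschitz[OF h B]) (use that \<open>\<alpha> > 0\<close> in auto)
    moreover have "B \<ge> 0" using B[of 0] \<open>\<alpha> > 0\<close> by auto
    ultimately show ?thesis using that
      by simp (metis abs_ge_self abs_mult mult.commute mult_left_mono order_trans)
  qed
  consider "\<bar>y\<bar> \<le> \<alpha>" | "\<alpha> < y" | "y < - \<alpha>" by linarith
  then show ?thesis
  proof cases
    case 1
    then show ?thesis by (rule inner)
  next
    case 2
    obtain w where w: "\<alpha> < w" "w < y"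
      "signed_integral h y - signed_integral h \<alpha> = (y - \<alpha>) * h w"
      using MVT2[OF 2, of "signed_integral h" h] signed_integral_has_real_derivative[OF h] by blast
    have "w * h w \<le> 0" using w \<open>\<alpha> > 0\<close> by (intro sign) auto
    then have "h w \<le> 0" using w \<open>\<alpha> > 0\<close> by (simp add: mult_le_0_iff)
    then have "signed_integral h y \<le> signed_integral h \<alpha>"
      using w mult_nonneg_nonpos[of "y - \<alpha>" "h w"] by linarith
    then show ?thesis using inner[of \<alpha>] \<open>\<alpha> > 0\<close> by simp
  next
    case 3
    obtain w where w: "y < w" "w < - \<alpha>"
      "signed_integral h (- \<alpha>) - signed_integral h y = (- \<alpha> - y) * h w"
      using MVT2[OF 3, of "signed_integral h" h] signed_integral_has_real_derivative[OF h] by blast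
    have "w * h w \<le> 0" using w \<open>\<alpha> > 0\<close> by (intro sign) auto
    then have "h w \<ge> 0" using w \<open>\<alpha> > 0\<close> by (simp add: mult_le_0_iff)
    then have "signed_integral h y \<le> signed_integral h (- \<alpha>)"
      using w mult_nonneg_nonneg[of "- \<alpha> - y" "h w"] by linarith
    then show ?thesis using inner[of "- \<alpha>"] \<open>\<alpha> > 0\<close> by simp
  qed
qed

lemma signed_integral_tendsto:
  assumes hs: "\<And>n. continuous_on UNIV (hs n)" and h: "continuous_on UNIV h"
    and B: "\<And>n t. \<bar>t\<bar> \<le> \<bar>y\<bar> \<Longrightarrow> \<bar>hs n t\<bar> \<le> B"
    and lim: "\<And>t. (\<lambda>n. hs n t) \<longlonglongrightarrow> h t"
  shows "(\<lambda>n. signed_integral (hs n) y) \<longlonglongrightarrow> signed_integral h y"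
proof (cases "0 \<le> y")
  case True
  have "(\<lambda>n. integral {0..y} (hs n)) \<longlonglongrightarrow> integral {0..y} h"
    by (rule dominated_convergence(2)[where h="\<lambda>_. B"])
       (use True in \<open>auto intro!: integrable_continuous_real continuous_on_subset[OF hs] B lim\<close>)
  then show ?thesis using True by (simp add: signed_integral_def)
next
  case False
  have "(\<lambda>n. integral {y..0} (hs n)) \<longlonglongrightarrow> integral {y..0} h"
    by (rule dominated_convergence(2)[where h="\<lambda>_. B"])
       (use False in \<open>auto intro!: integrable_continuous_real continuous_on_subset[OF hs] B lim\<close>)
  then show ?thesis using False by (simp add: signed_integral_def tendsto_minus)
qed

lemma bounded_family_convergent_subseq:
  fixes x :: "nat \<Rightarrow> 'a \<Rightarrow> real"
  assumes "finite K" and "\<And>n k. k \<in> K \<Longrightarrow> \<bar>x n k\<bar> \<le> R"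
  shows "\<exists>r l. strict_mono r \<and> (\<forall>k\<in>K. (\<lambda>i. x (r i) k) \<longlonglongrightarrow> l k)"
  using assms
proof (induction K rule: finite_induct)
  case empty
  then show ?case by (intro exI[of _ id]) (auto simp: strict_mono_def)
next
  case (insert a K)
  then obtain r l where r: "strict_mono r" and l: "\<forall>k\<in>K. (\<lambda>i. x (r i) k) \<longlonglongrightarrow> l k"
    by auto
  have "bounded (range (\<lambda>i. x (r i) a))"
    unfolding bounded_iff using insert.prems by auto
  then obtain la s where s: "strict_mono s" and la: "((\<lambda>i. x (r i) a) \<circ> s) \<longlonglongrightarrow> la"
    using bounded_imp_convergent_subsequence by blast
  have "(\<lambda>i. x ((r \<circ> s) i) k) \<longlonglongrightarrow> (l(a := la)) k" if "k \<in> insert a K" for k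
  proof (cases "k = a")
    case True
    then show ?thesis using la by (simp add: o_def)
  next
    case False
    then have "((\<lambda>i. x (r i) k) \<circ> s) \<longlonglongrightarrow> l k"
      using that l LIMSEQ_subseq_LIMSEQ[OF _ s] by blast
    then show ?thesis using False by (simp add: o_def)
  qed
  then show ?case using strict_mono_o[OF r s] by blast
qed

lemma abs_le_sum_abs_fdiff:
  assumes "y 0 = 0" "k \<le> n"
  shows "\<bar>y k\<bar> \<le> (\<Sum>j<n. \<bar>fdiff y j\<bar>)"
proof -
  have "y k = (\<Sum>j<k. fdiff y j)"
    using sum_lessThan_telescope[of y k] assms by (simp add: fdiff_def)
  then have "\<bar>y k\<bar> \<le> (\<Sum>j<k. \<bar>fdiff y j\<bar>)" by (simp add: sum_abs)
  also have "\<dots> \<le> (\<Sum>j<n. \<bar>fdiff y j\<bar>)"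
    by (rule sum_mono2) (use assms in auto)
  finally show ?thesis .
qed

lemma abs_le_1_plus_power2: "\<bar>d :: real\<bar> \<le> 1 + d\<^sup>2"
proof -
  have "0 \<le> (\<bar>d\<bar> - 1)\<^sup>2" by simp
  also have "\<dots> = d\<^sup>2 - 2 * \<bar>d\<bar> + 1" by (simp add: power2_eq_square algebra_simps)
  finally show ?thesis by (simp add: zero_le_power2)
qed

lemma half_sq_minus_linear_ge:
  fixes d G m :: real
  assumes "m > 0"
  shows "m/4 * d\<^sup>2 - G\<^sup>2/m \<le> m/2 * d\<^sup>2 - G * \<bar>d\<bar>"
proof -
  have "0 \<le> (m/2 * \<bar>d\<bar> - G)\<^sup>2 / m" using assms by simp
  also have "\<dots> = m/4 * d\<^sup>2 - G * \<bar>d\<bar> + G\<^sup>2/m"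
    using assms by (simp add: power2_eq_square field_simps)
  finally show ?thesis by simp
qed

lemma Espace_add_scaled: "x \<in> Espace T \<Longrightarrow> h \<in> Espace T \<Longrightarrow> (\<lambda>k. x k + t * h k) \<in> Espace T"
  by (simp add: Espace_def)

lemma zero_in_Espace: "(\<lambda>_. 0) \<in> Espace T"
  by (simp add: Espace_def)

lemma LM_abs_le: "u \<in> LM T M \<Longrightarrow> k \<in> {1..T} \<Longrightarrow> \<bar>u k\<bar> \<le> M"
  by (simp add: LM_def)

lemma maxnorm_tendsto_0_imp_tendsto:
  assumes "(\<lambda>n. maxnorm T (\<lambda>k. us n k - u k)) \<longlonglongrightarrow> 0" and "k \<in> {1..T}"
  shows "(\<lambda>n. us n k) \<longlonglongrightarrow> u k"
proof -
  have "norm (us n k - u k) \<le> maxnorm T (\<lambda>k. us n k - u k)" for n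
    using \<open>k \<in> {1..T}\<close> by (auto simp: maxnorm_def intro!: Max_ge)
  then have "(\<lambda>n. us n k - u k) \<longlonglongrightarrow> 0"
    by (intro Lim_null_comparison[OF always_eventually assms(1)]) blast
  then show ?thesis by (simp add: LIM_zero_iff)
qed

locale discrete_bvp =
  fixes T :: nat and M :: real
    and f :: "nat \<Rightarrow> real \<Rightarrow> real \<Rightarrow> real"
    and p g :: "nat \<Rightarrow> real"
  assumes f_continuous: "\<forall>k \<in> {1..T}. continuous_on (UNIV \<times> {-M..M}) (\<lambda>(y, u). f k y u)"
    and sign_condition:
      "\<exists>\<alpha> > 0. \<forall>k \<in> {1..T}. \<forall>y u. \<bar>y\<bar> \<ge> \<alpha> \<longrightarrow> \<bar>u\<bar> \<le> M \<longrightarrow> y * f k y u \<le> 0"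
    and p_min_pos: "Min (p ` {1..T+1}) > 0"
begin

lemma continuous_on_f:
  assumes "k \<in> {1..T}" "\<bar>u\<bar> \<le> M"
  shows "continuous_on UNIV (\<lambda>t. f k t u)"
proof -
  have "continuous_on UNIV ((\<lambda>(y, u). f k y u) \<circ> (\<lambda>t. (t, u)))"
    by (rule continuous_on_compose[OF _ continuous_on_subset[OF f_continuous[rule_format]]])
       (use assms in \<open>auto intro!: continuous_intros\<close>)
  then show ?thesis by (simp add: o_def)
qed

lemma Fprim_eq_signed_integral: "Fprim f k y u = signed_integral (\<lambda>t. f k t u) y"
  by (simp add: Fprim_def signed_integral_def)

lemma f_bounded:
  assumes k: "k \<in> {1..T}"
  obtains B where "\<And>t u. \<bar>t\<bar> \<le> R \<Longrightarrow> \<bar>u\<bar> \<le> M \<Longrightarrow> \<bar>f k t u\<bar> \<le> B"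
proof -
  have "compact ((\<lambda>(y, u). f k y u) ` ({-R..R} \<times> {-M..M}))"
    by (rule compact_continuous_image[OF continuous_on_subset[OF f_continuous[rule_format, OF k]]])
       (auto intro: compact_Times)
  then obtain B where "\<forall>x \<in> (\<lambda>(y, u). f k y u) ` ({-R..R} \<times> {-M..M}). norm x \<le> B"
    using compact_imp_bounded bounded_iff by metis
  then have "\<bar>f k t u\<bar> \<le> B" if "\<bar>t\<bar> \<le> R" "\<bar>u\<bar> \<le> M" for t u
    using that by force
  then show ?thesis by (rule that)
qed

lemma Fprim_has_real_derivative:
  assumes "k \<in> {1..T}" "\<bar>u\<bar> \<le> M"
  shows "((\<lambda>y. Fprim f k y u) has_real_derivative f k y u) (at y)"
  unfolding Fprim_eq_signed_integral
  using signed_integral_has_real_derivative[OF continuous_on_f[OF assms]] by simp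

lemma Fprim_bounded_above:
  obtains C where "\<And>k y u. k \<in> {1..T} \<Longrightarrow> \<bar>u\<bar> \<le> M \<Longrightarrow> Fprim f k y u \<le> C k"
proof -
  obtain \<alpha> where "\<alpha> > 0"
    and sign: "\<forall>k \<in> {1..T}. \<forall>y u. \<bar>y\<bar> \<ge> \<alpha> \<longrightarrow> \<bar>u\<bar> \<le> M \<longrightarrow> y * f k y u \<le> 0"
    using sign_condition by blast
  have "\<exists>C. \<forall>y u. \<bar>u\<bar> \<le> M \<longrightarrow> Fprim f k y u \<le> C" if k: "k \<in> {1..T}" for k
  proof -
    obtain B where "\<And>t u. \<bar>t\<bar> \<le> \<alpha> \<Longrightarrow> \<bar>u\<bar> \<le> M \<Longrightarrow> \<bar>f k t u\<bar> \<le> B"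
      using f_bounded[OF k] by blast
    then show ?thesis
      using sign k \<open>\<alpha> > 0\<close>
      by (auto simp: Fprim_eq_signed_integral intro!: exI[of _ "\<alpha> * B"]
               signed_integral_bounded_above[OF continuous_on_f[OF k]])
  qed
  then show ?thesis using that by metis
qed

lemma Fprim_tendsto:
  assumes k: "k \<in> {1..T}" and ys: "ys \<longlonglongrightarrow> y" and us: "us \<longlonglongrightarrow> u"
    and usM: "\<And>n. \<bar>us n\<bar> \<le> M" and uM: "\<bar>u\<bar> \<le> M"
  shows "(\<lambda>n. Fprim f k (ys n) (us n)) \<longlonglongrightarrow> Fprim f k y u"
proof -
  obtain B where B: "\<And>t u. \<bar>t\<bar> \<le> \<bar>y\<bar> + 1 \<Longrightarrow> \<bar>u\<bar> \<le> M \<Longrightarrow> \<bar>f k t u\<bar> \<le> B"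
    using f_bounded[OF k] by blast
  have "(\<lambda>n. Fprim f k (ys n) (us n) - Fprim f k y (us n)) \<longlonglongrightarrow> 0"
  proof (rule Lim_null_comparison)
    have "eventually (\<lambda>n. dist (ys n) y < 1) sequentially"
      using ys by (simp add: tendsto_iff)
    then show "eventually (\<lambda>n. norm (Fprim f k (ys n) (us n) - Fprim f k y (us n))
                                \<le> B * \<bar>ys n - y\<bar>) sequentially"
    proof eventually_elim
      case (elim n)
      then show ?case
        unfolding Fprim_eq_signed_integral real_norm_def
        by (intro signed_integral_lipschitz[OF continuous_on_f[OF k usM]])
           (use B usM in \<open>auto simp: dist_real_def\<close>)
    qed
    have "(\<lambda>n. B * \<bar>ys n - y\<bar>) \<longlonglongrightarrow> B * \<bar>y - y\<bar>"
      by (intro tendsto_intros ys)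
    then show "(\<lambda>n. B * \<bar>ys n - y\<bar>) \<longlonglongrightarrow> 0" by simp
  qed
  moreover have "(\<lambda>n. Fprim f k y (us n)) \<longlonglongrightarrow> Fprim f k y u"
    unfolding Fprim_eq_signed_integral
  proof (rule signed_integral_tendsto[OF continuous_on_f[OF k usM] continuous_on_f[OF k uM]])
    show "\<bar>f k t (us n)\<bar> \<le> B" if "\<bar>t\<bar> \<le> \<bar>y\<bar>" for n t
      using B usM that by auto
    fix t
    have "((\<lambda>n. (\<lambda>(y, u). f k y u) (t, us n)) \<longlongrightarrow> (\<lambda>(y, u). f k y u) (t, u)) sequentially"
      by (rule continuous_on_tendsto_compose[OF f_continuous[rule_format, OF k]])
         (use uM usM in \<open>auto intro!: tendsto_intros us always_eventually simp: abs_le_iff\<close>,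
          metis minus_le_iff)
    then show "(\<lambda>n. f k t (us n)) \<longlonglongrightarrow> f k t u" by simp
  qed
  ultimately show ?thesis
    using tendsto_add by fastforce
qed

definition pmin :: real where
  "pmin = Min (p ` {1..T+1})"

lemma pmin_le: "j \<in> {1..T+1} \<Longrightarrow> pmin \<le> p j"
  unfolding pmin_def by (rule Min_le) auto

lemma pmin_pos: "pmin > 0"
  using p_min_pos by (simp add: pmin_def)

lemma kinetic_term_ge:
  "(\<Sum>j<T+1. pmin/2 * (fdiff y j)\<^sup>2) \<le> (\<Sum>k = 1..T+1. p k / 2 * (fdiff y (k - 1))\<^sup>2)"
proof -
  have "(\<Sum>j<T+1. pmin/2 * (fdiff y j)\<^sup>2) \<le> (\<Sum>j<T+1. p (j+1) / 2 * (fdiff y j)\<^sup>2)"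
    by (rule sum_mono) (use pmin_le in \<open>auto intro!: mult_right_mono divide_right_mono\<close>)
  also have "\<dots> = (\<Sum>k = 1..T+1. p k / 2 * (fdiff y (k - 1))\<^sup>2)"
    by (simp add: sum.atLeast1_atMost_eq)
  finally show ?thesis .
qed

lemma source_term_ge:
  assumes "y 0 = 0"
  shows "- (\<Sum>k = 1..T. \<bar>g k\<bar>) * (\<Sum>j<T+1. \<bar>fdiff y j\<bar>) \<le> (\<Sum>k = 1..T. g k * y k)"
proof -
  have "- \<bar>g k\<bar> * (\<Sum>j<T+1. \<bar>fdiff y j\<bar>) \<le> g k * y k" if "k \<in> {1..T}" for k
  proof -
    have "\<bar>y k\<bar> \<le> (\<Sum>j<T+1. \<bar>fdiff y j\<bar>)"
      by (rule abs_le_sum_abs_fdiff[where y=y]) (use assms that in auto)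
    then have "\<bar>g k * y k\<bar> \<le> \<bar>g k\<bar> * (\<Sum>j<T+1. \<bar>fdiff y j\<bar>)"
      by (simp add: abs_mult mult_left_mono)
    then show ?thesis by linarith
  qed
  then show ?thesis
    using sum_mono[of "{1..T}" "\<lambda>k. - \<bar>g k\<bar> * (\<Sum>j<T+1. \<bar>fdiff y j\<bar>)"]
    by (simp add: sum_distrib_right sum_negf)
qed

lemma Jfun_coercive:
  obtains K where "\<And>u y. u \<in> LM T M \<Longrightarrow> y 0 = 0 \<Longrightarrow>
    pmin/4 * (\<Sum>j<T+1. (fdiff y j)\<^sup>2) - K \<le> Jfun T p f g u y"
proof -
  obtain C where C: "\<And>k y u. k \<in> {1..T} \<Longrightarrow> \<bar>u\<bar> \<le> M \<Longrightarrow> Fprim f k y u \<le> C k"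
    using Fprim_bounded_above by blast
  define G where "G = (\<Sum>k = 1..T. \<bar>g k\<bar>)"
  have "pmin/4 * (\<Sum>j<T+1. (fdiff y j)\<^sup>2) - ((T+1) * (G\<^sup>2/pmin) + (\<Sum>k = 1..T. C k))
        \<le> Jfun T p f g u y" if u: "u \<in> LM T M" and "y 0 = 0" for u y
  proof -
    have "(\<Sum>k = 1..T. Fprim f k (y k) (u k)) \<le> (\<Sum>k = 1..T. C k)"
      by (rule sum_mono) (use C LM_abs_le[OF u] in auto)
    moreover have "pmin/4 * (\<Sum>j<T+1. (fdiff y j)\<^sup>2) - (T+1) * (G\<^sup>2/pmin)
        = (\<Sum>j<T+1. pmin/4 * (fdiff y j)\<^sup>2 - G\<^sup>2/pmin)"
      by (simp only: sum_subtractf sum_distrib_left sum_constant) simp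
    moreover have "\<dots> \<le> (\<Sum>j<T+1. pmin/2 * (fdiff y j)\<^sup>2 - G * \<bar>fdiff y j\<bar>)"
      by (rule sum_mono) (rule half_sq_minus_linear_ge[OF pmin_pos])
    moreover have "\<dots> = (\<Sum>j<T+1. pmin/2 * (fdiff y j)\<^sup>2) - G * (\<Sum>j<T+1. \<bar>fdiff y j\<bar>)"
      by (simp only: sum_subtractf sum_distrib_left)
    ultimately show ?thesis
      using kinetic_term_ge[of y] source_term_ge[where y=y, OF \<open>y 0 = 0\<close>]
      unfolding Jfun_def G_def by linarith
  qed
  then show ?thesis by (rule that)
qed

lemma Jfun_sublevel_bounded:
  obtains R where "\<And>u y k. u \<in> LM T M \<Longrightarrow> y \<in> Espace T \<Longrightarrow> Jfun T p f g u y \<le> L \<Longrightarrow> \<bar>y k\<bar> \<le> R"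
proof -
  obtain K where K: "\<And>u y. u \<in> LM T M \<Longrightarrow> y 0 = 0 \<Longrightarrow>
      pmin/4 * (\<Sum>j<T+1. (fdiff y j)\<^sup>2) - K \<le> Jfun T p f g u y"
    using Jfun_coercive by blast
  define Q where "Q = 4 * (L + K) / pmin"
  have "\<bar>y k\<bar> \<le> (T+1) * (1 + Q)"
    if u: "u \<in> LM T M" and y: "y \<in> Espace T" and J: "Jfun T p f g u y \<le> L" for u y k
  proof -
    have y0: "y 0 = 0" using y by (simp add: Espace_def)
    have "pmin/4 * (\<Sum>j<T+1. (fdiff y j)\<^sup>2) \<le> L + K" using K[of u y, OF u y0] J by linarith
    then have Q: "(\<Sum>j<T+1. (fdiff y j)\<^sup>2) \<le> Q" using pmin_pos by (simp add: Q_def field_simps)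
    have "\<bar>fdiff y j\<bar> \<le> 1 + Q" if "j < T+1" for j
    proof -
      have "(fdiff y j)\<^sup>2 \<le> (\<Sum>j<T+1. (fdiff y j)\<^sup>2)"
        by (rule member_le_sum) (use that in auto)
      moreover have "\<bar>fdiff y j\<bar> \<le> 1 + (fdiff y j)\<^sup>2"
        by (rule abs_le_1_plus_power2)
      ultimately show ?thesis using Q by linarith
    qed
    then have "(\<Sum>j<T+1. \<bar>fdiff y j\<bar>) \<le> (T+1) * (1 + Q)"
      using sum_mono[of "{..<T+1}" "\<lambda>j. \<bar>fdiff y j\<bar>" "\<lambda>_. 1 + Q"] by simp
    moreover have "\<bar>y k\<bar> \<le> (\<Sum>j<T+1. \<bar>fdiff y j\<bar>)"
    proof (cases "k \<le> T + 1")
      case True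
      then show ?thesis by (rule abs_le_sum_abs_fdiff[where y=y, OF y0])
    next
      case False
      then have "y k = 0" using y by (simp add: Espace_def)
      then show ?thesis by (simp add: sum_nonneg)
    qed
    ultimately show ?thesis by linarith
  qed
  then show ?thesis by (rule that)
qed

lemma Jfun_zero: "Jfun T p f g u (\<lambda>_. 0) = 0"
  by (simp add: Jfun_def fdiff_def Fprim_eq_signed_integral)

lemma Jfun_tendsto:
  assumes zs: "\<And>k. (\<lambda>n. zs n k) \<longlonglongrightarrow> z k"
    and us: "\<And>k. k \<in> {1..T} \<Longrightarrow> (\<lambda>n. us n k) \<longlonglongrightarrow> u k"
    and usL: "\<And>n. us n \<in> LM T M" and uL: "u \<in> LM T M"
  shows "(\<lambda>n. Jfun T p f g (us n) (zs n)) \<longlonglongrightarrow> Jfun T p f g u z"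
proof -
  have F: "(\<lambda>n. \<Sum>k = 1..T. Fprim f k (zs n k) (us n k)) \<longlonglongrightarrow> (\<Sum>k = 1..T. Fprim f k (z k) (u k))"
    by (rule tendsto_sum) (auto intro!: Fprim_tendsto zs us LM_abs_le[OF usL] LM_abs_le[OF uL])
  show ?thesis
    unfolding Jfun_def fdiff_def
    by (intro tendsto_add tendsto_diff F tendsto_sum tendsto_mult tendsto_const zs tendsto_power)
qed

lemma Jfun_directional_derivative:
  assumes u: "u \<in> LM T M"
  shows "((\<lambda>t. Jfun T p f g u (\<lambda>k. x k + t * h k)) has_real_derivative
    (\<Sum>k = 1..T+1. p k * fdiff x (k-1) * fdiff h (k-1)) - (\<Sum>k = 1..T. f k (x k) (u k) * h k)
      + (\<Sum>k = 1..T. g k * h k)) (at 0)"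
proof -
  have fdiff_add_scaled: "fdiff (\<lambda>k. x k + t * h k) j = fdiff x j + t * fdiff h j" for t j
    by (simp add: fdiff_def algebra_simps)
  have F: "((\<lambda>t. Fprim f k (x k + t * h k) (u k)) has_real_derivative f k (x k) (u k) * h k) (at 0)"
    if k: "k \<in> {1..T}" for k
  proof -
    have "((\<lambda>t. x k + t * h k) has_real_derivative h k) (at 0)"
      by (auto intro!: derivative_eq_intros)
    then show ?thesis
      using DERIV_chain2[where f="\<lambda>y. Fprim f k y (u k)" and g="\<lambda>t. x k + t * h k" and x=0 and s=UNIV]
        Fprim_has_real_derivative[OF k LM_abs_le[OF u k], of "x k"]
      by simp
  qed
  show ?thesis
    unfolding Jfun_def fdiff_add_scaled
    by (intro DERIV_add DERIV_diff DERIV_sum F) (auto intro!: derivative_eq_intros)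
qed

text \<open>Testing with the unit vector at \<open>k\<close> isolates the \<open>k\<close>-th equation: only the
  \<open>k\<close>-th and \<open>(k+1)\<close>-st differences of it are nonzero.\<close>
lemma minimizer_in_Vset_and_solves_bvp:
  assumes u: "u \<in> LM T M" and x: "x \<in> Espace T"
    and min: "\<forall>v \<in> Espace T. Jfun T p f g u x \<le> Jfun T p f g u v"
  shows "x \<in> Vset T p f g u \<and> solves_bvp T p f g u x"
proof -
  have critical: "(\<Sum>k = 1..T+1. p k * fdiff x (k-1) * fdiff h (k-1))
      - (\<Sum>k = 1..T. f k (x k) (u k) * h k) + (\<Sum>k = 1..T. g k * h k) = 0"
    if h: "h \<in> Espace T" for h
    by (rule DERIV_local_min[OF Jfun_directional_derivative[OF u], of 1])
       (use min Espace_add_scaled[OF x h] in auto)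
  have "((\<lambda>t. Jfun T p f g u (\<lambda>k. x k + t * h k)) has_real_derivative 0) (at 0)"
    if h: "h \<in> Espace T" for h
    using Jfun_directional_derivative[OF u, of x h] unfolding critical[OF h] .
  then have "x \<in> Vset T p f g u"
    using x min by (simp add: Vset_def)
  moreover have "fdiff (\<lambda>j. p j * fdiff x (j - 1)) k + f k (x k) (u k) = g k"
    if k: "k \<in> {1..T}" for k
  proof -
    define e where "e = (\<lambda>j::nat. if j = k then 1 else (0::real))"
    have "e \<in> Espace T" using k by (auto simp: e_def Espace_def)
    have "(\<Sum>j = 1..T+1. p j * fdiff x (j-1) * fdiff e (j-1))
        = (\<Sum>j = 1..T+1. if j = k then p j * fdiff x (j-1) else 0)
          - (\<Sum>j = 1..T+1. if j = Suc k then p j * fdiff x (j-1) else 0)"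
      unfolding sum_subtractf[symmetric]
      by (rule sum.cong) (use k in \<open>auto simp: e_def fdiff_def\<close>)
    also have "\<dots> = - fdiff (\<lambda>j. p j * fdiff x (j - 1)) k"
      unfolding fdiff_def[of "\<lambda>j. p j * fdiff x (j - 1)"] using k by simp
    finally show ?thesis
      using critical[OF \<open>e \<in> Espace T\<close>] k
      by (simp add: e_def if_distrib sum.delta cong: if_cong)
  qed
  ultimately show ?thesis
    using x by (simp add: solves_bvp_def Espace_def)
qed

text \<open>The error terms \<open>e n\<close> allow the same lemma to serve for a minimising sequence of a
  single functional and for exact minimisers of varying functionals.\<close>
lemma approximate_minimizers_subseq_converge:
  assumes usL: "\<And>n. us n \<in> LM T M" and uL: "u \<in> LM T M"
    and us: "\<And>k. k \<in> {1..T} \<Longrightarrow> (\<lambda>n. us n k) \<longlonglongrightarrow> u k"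
    and xE: "\<And>n. xs n \<in> Espace T"
    and approx_min: "\<And>n y. y \<in> Espace T \<Longrightarrow> Jfun T p f g (us n) (xs n) \<le> Jfun T p f g (us n) y + e n"
    and e: "e \<longlonglongrightarrow> 0"
  obtains r x where "strict_mono r" "x \<in> Espace T"
    "(\<lambda>i. Enorm T (\<lambda>k. xs (r i) k - x k)) \<longlonglongrightarrow> 0"
    "\<forall>y \<in> Espace T. Jfun T p f g u x \<le> Jfun T p f g u y"
proof -
  obtain L where L: "\<And>n. e n \<le> L"
    using convergent_imp_Bseq[of e] e BseqE unfolding convergent_def
    by (metis abs_le_D1 real_norm_def)
  have "Jfun T p f g (us n) (xs n) \<le> L" for n
    using approx_min[OF zero_in_Espace, of n] L[of n] by (simp add: Jfun_zero)
  then obtain R where "\<And>n k. \<bar>xs n k\<bar> \<le> R"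
    using Jfun_sublevel_bounded[of L] usL xE by metis
  then obtain r l where r: "strict_mono r" and l: "\<forall>k\<in>{1..T}. (\<lambda>i. xs (r i) k) \<longlonglongrightarrow> l k"
    using bounded_family_convergent_subseq[of "{1..T}" xs] by blast
  define x where "x = (\<lambda>k. if k \<in> {1..T} then l k else 0)"
  have "x \<in> Espace T" by (auto simp: x_def Espace_def)
  have xs_tendsto: "(\<lambda>i. xs (r i) k) \<longlonglongrightarrow> x k" for k
  proof (cases "k \<in> {1..T}")
    case True
    then show ?thesis using l by (simp add: x_def)
  next
    case False
    then have "k = 0 \<or> k = T + 1 \<or> k > T + 1" by auto
    then have "xs n k = 0" for n
      using xE[of n] by (auto simp: Espace_def)
    moreover have "x k = 0"
      using False unfolding x_def by (simp only: if_False)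
    ultimately show ?thesis by simp
  qed
  have "(\<lambda>i. Enorm T (\<lambda>k. xs (r i) k - x k)) \<longlonglongrightarrow> sqrt (\<Sum>k = 1..T. (fdiff (\<lambda>k. x k - x k) k)\<^sup>2)"
    unfolding Enorm_def fdiff_def by (intro tendsto_intros xs_tendsto)
  then have Enorm_tendsto: "(\<lambda>i. Enorm T (\<lambda>k. xs (r i) k - x k)) \<longlonglongrightarrow> 0"
    by (simp add: fdiff_def)
  have us_r: "(\<lambda>n. us (r n) k) \<longlonglongrightarrow> u k" if "k \<in> {1..T}" for k
    using LIMSEQ_subseq_LIMSEQ[OF us[OF that] r] by (simp add: o_def)
  have "Jfun T p f g u x \<le> Jfun T p f g u y" if "y \<in> Espace T" for y
  proof (rule LIMSEQ_le)
    show "(\<lambda>n. Jfun T p f g (us (r n)) (xs (r n))) \<longlonglongrightarrow> Jfun T p f g u x"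
      by (rule Jfun_tendsto[OF xs_tendsto us_r usL uL])
    have "(\<lambda>n. Jfun T p f g (us (r n)) y + e (r n)) \<longlonglongrightarrow> Jfun T p f g u y + 0"
      using LIMSEQ_subseq_LIMSEQ[OF e r]
      by (intro tendsto_add Jfun_tendsto[OF tendsto_const us_r usL uL]) (simp_all add: o_def)
    then show "(\<lambda>n. Jfun T p f g (us (r n)) y + e (r n)) \<longlonglongrightarrow> Jfun T p f g u y" by simp
    show "\<exists>N. \<forall>n\<ge>N. Jfun T p f g (us (r n)) (xs (r n)) \<le> Jfun T p f g (us (r n)) y + e (r n)"
      using approx_min[OF that] by blast
  qed
  then show ?thesis using that r \<open>x \<in> Espace T\<close> Enorm_tendsto by blast
qed

lemma Jfun_has_minimizer:
  assumes u: "u \<in> LM T M"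
  obtains x where "x \<in> Espace T" "\<forall>y \<in> Espace T. Jfun T p f g u x \<le> Jfun T p f g u y"
proof -
  obtain K where K: "\<And>u y. u \<in> LM T M \<Longrightarrow> y 0 = 0 \<Longrightarrow>
      pmin/4 * (\<Sum>j<T+1. (fdiff y j)\<^sup>2) - K \<le> Jfun T p f g u y"
    using Jfun_coercive by blast
  define S where "S = Jfun T p f g u ` Espace T"
  have "- K \<le> Jfun T p f g u y" if "y \<in> Espace T" for y
  proof -
    have "0 \<le> pmin/4 * (\<Sum>j<T+1. (fdiff y j)\<^sup>2)"
      using pmin_pos by (intro mult_nonneg_nonneg sum_nonneg) auto
    moreover have "y 0 = 0" using that by (simp add: Espace_def)
    ultimately show ?thesis using K[of u y, OF u] by fastforce
  qed
  then have "bdd_below S" unfolding S_def bdd_below_def by blast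
  have "S \<noteq> {}" using zero_in_Espace by (auto simp: S_def)
  have "\<exists>x \<in> Espace T. Jfun T p f g u x < Inf S + inverse (real (Suc n))" for n
    using cInf_lessD[OF \<open>S \<noteq> {}\<close>, of "Inf S + inverse (real (Suc n))"] by (auto simp: S_def)
  then obtain xs where xs: "\<And>n. xs n \<in> Espace T"
    and "\<And>n. Jfun T p f g u (xs n) < Inf S + inverse (real (Suc n))"
    by metis
  moreover have "Inf S \<le> Jfun T p f g u y" if "y \<in> Espace T" for y
    by (rule cInf_lower) (use that \<open>bdd_below S\<close> in \<open>auto simp: S_def\<close>)
  ultimately have approx_min: "Jfun T p f g u (xs n) \<le> Jfun T p f g u y + inverse (real (Suc n))"
    if "y \<in> Espace T" for n y
    using that by (meson less_imp_le add_right_mono order_trans)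
  show ?thesis
    using approximate_minimizers_subseq_converge[of "\<lambda>_. u" u xs,
        OF u u tendsto_const xs approx_min LIMSEQ_inverse_real_of_nat] that
    by blast
qed

end

theorem theorem1:
  fixes T :: nat and M :: real
    and f :: "nat \<Rightarrow> real \<Rightarrow> real \<Rightarrow> real"
    and p g :: "nat \<Rightarrow> real"
  assumes T1: "T \<ge> 1" and Mpos: "M > 0"
    and A1: "\<forall>k \<in> {1..T}. continuous_on (UNIV \<times> {-M..M}) (\<lambda>(y, u). f k y u)"
    and A2: "\<exists>\<alpha> > 0. \<forall>k \<in> {1..T}. \<forall>y u. \<bar>y\<bar> \<ge> \<alpha> \<longrightarrow> \<bar>u\<bar> \<le> M \<longrightarrow> y * f k y u \<le> 0"
    and A3: "Min (p ` {1..T+1}) > 0"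
  shows "(\<forall>u \<in> LM T M. Vset T p f g u \<noteq> {} \<and>
            (\<exists>x \<in> Vset T p f g u. solves_bvp T p f g u x))
         \<and> (\<forall>us ubar xs.
              (\<forall>n. us n \<in> LM T M) \<longrightarrow> ubar \<in> LM T M \<longrightarrow>
              (\<lambda>n. maxnorm T (\<lambda>k. us n k - ubar k)) \<longlonglongrightarrow> 0 \<longrightarrow>
              (\<forall>n. xs n \<in> Vset T p f g (us n)) \<longrightarrow>
              (\<exists>r xbar. strict_mono r \<and> xbar \<in> Espace T \<and>
                 (\<lambda>i. Enorm T (\<lambda>k. xs (r i) k - xbar k)) \<longlonglongrightarrow> 0 \<and>
                 (\<forall>y \<in> Espace T. Jfun T p f g ubar xbar \<le> Jfun T p f g ubar y) \<and>
                 xbar \<in> Vset T p f g ubar \<and> solves_bvp T p f g ubar xbar))"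
proof -
  interpret discrete_bvp T M f p g
    using A1 A2 A3 by unfold_locales
  have existence: "\<exists>x \<in> Vset T p f g u. solves_bvp T p f g u x" if "u \<in> LM T M" for u
    using Jfun_has_minimizer[OF that] minimizer_in_Vset_and_solves_bvp[OF that] by metis
  have stability: "\<exists>r xbar. strict_mono r \<and> xbar \<in> Espace T \<and>
                 (\<lambda>i. Enorm T (\<lambda>k. xs (r i) k - xbar k)) \<longlonglongrightarrow> 0 \<and>
                 (\<forall>y \<in> Espace T. Jfun T p f g ubar xbar \<le> Jfun T p f g ubar y) \<and>
                 xbar \<in> Vset T p f g ubar \<and> solves_bvp T p f g ubar xbar"
    if usL: "\<forall>n. us n \<in> LM T M" and uL: "ubar \<in> LM T M"
      and uc: "(\<lambda>n. maxnorm T (\<lambda>k. us n k - ubar k)) \<longlonglongrightarrow> 0"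
      and xV: "\<forall>n. xs n \<in> Vset T p f g (us n)"
    for us ubar xs
  proof -
    have "\<And>n. xs n \<in> Espace T"
      and "\<And>n y. y \<in> Espace T \<Longrightarrow> Jfun T p f g (us n) (xs n) \<le> Jfun T p f g (us n) y + 0"
      using xV by (simp_all add: Vset_def)
    then obtain r xbar where "strict_mono r" "xbar \<in> Espace T"
      "(\<lambda>i. Enorm T (\<lambda>k. xs (r i) k - xbar k)) \<longlonglongrightarrow> 0"
      "\<forall>y \<in> Espace T. Jfun T p f g ubar xbar \<le> Jfun T p f g ubar y"
      using approximate_minimizers_subseq_converge[of us ubar xs "\<lambda>_. 0"] usL uL
        maxnorm_tendsto_0_imp_tendsto[OF uc] by blast
    then show ?thesis
      using minimizer_in_Vset_and_solves_bvp[OF uL] by blast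
  qed
  show ?thesis using existence stability by blast
qed

end
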